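(* Let $\alpha>1$, $\gamma,a\in\mathbb R$, $d\in\mathbb N$, and assume $d+\gamma<\alpha d$ if $a=0$ and $d+\gamma<\alpha(d-2)$ if $a\ne0$. Let $F_\alpha$ satisfy $F_\alpha(z)=z^\alpha$ for $z\ge0$. Let $u\ge0$ be a nonnegative weak solution of (HH) on $[0,T)$ with initial datum $u_0\in L^1_{loc}(\mathbb R^d)$. Let $\phi\in C_c^\infty(\mathbb R^d,[0,1])$ with $\phi=1$ on $\{|x|\le1/2\}$ and $\operatorname{supp}\phi\subset\{|x|\le1\}$. Then for every $l\ge\max\left(3,\frac{2\alpha}{\alpha-1}\right)$, $$\int_{|x|<\sqrt T}u_0(x)\,\phi^l\!\left(\frac x{\sqrt T}\right)dx\le C\,T^{-\frac{2+\gamma}{2(\alpha-1)}+\frac d2},$$ where $C$ is independent of $T$ and $u$.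
   Context: (HH): $\partial_tu-\Delta u+a|x|^{-2}u=|x|^\gamma F_\alpha(u)$, $u(0)=u_0$. Weak solution: $u\in L^\alpha\big((0,T);(L^\alpha_{\gamma/\alpha})_{loc}(\mathbb R^d)\big)$ (i.e. $|x|^{\gamma/\alpha}u\in L^\alpha$ on $(0,T)\times K$ for every compact $K$) such that for all $T'\in[0,T]$ and all $\eta\in C^{1,2}([0,T]\times\mathbb R^d)$ with $\eta(t,\cdot)$ compactly supported, $\int u(T',x)\eta(T',x)dx-\int u_0(x)\eta(0,x)dx=\int_{[0,T']\times\mathbb R^d}\big[u(\partial_t\eta+\Delta\eta-a|x|^{-2}\eta)+|x|^\gamma F_\alpha(u)\eta\big]dx\,dt.$ *)

theory Defs
  imports "HOL-Analysis.Analysis"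
begin

coinductive smooth_fun :: "('a::euclidean_space \<Rightarrow> real) \<Rightarrow> bool" where
  "(\<And>x. f differentiable (at x)) \<Longrightarrow>
   (\<And>v. smooth_fun (\<lambda>x. frechet_derivative f (at x) v)) \<Longrightarrow> smooth_fun f"

definition L1_loc :: "('a::euclidean_space \<Rightarrow> real) \<Rightarrow> bool" where
  "L1_loc f \<longleftrightarrow> f \<in> borel_measurable lborel \<and>
     (\<forall>K. compact K \<longrightarrow> set_integrable lborel K f)"

definition C12_with ::
  "real \<Rightarrow> (real \<Rightarrow> 'a::euclidean_space \<Rightarrow> real) \<Rightarrow> (real \<Rightarrow> 'a \<Rightarrow> real)
   \<Rightarrow> (real \<Rightarrow> 'a \<Rightarrow> 'a \<Rightarrow> real) \<Rightarrow> (real \<Rightarrow> 'a \<Rightarrow> 'a \<Rightarrow> 'a \<Rightarrow> real) \<Rightarrow> bool" where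
  "C12_with T \<eta> \<eta>t Dx Dxx \<longleftrightarrow>
     (\<forall>t\<in>{0..T}. \<forall>x. ((\<lambda>s. \<eta> s x) has_real_derivative \<eta>t t x) (at t within {0..T}))
   \<and> (\<forall>t\<in>{0..T}. \<forall>x. (\<eta> t has_derivative Dx t x) (at x))
   \<and> (\<forall>t\<in>{0..T}. \<forall>x v. ((\<lambda>y. Dx t y v) has_derivative Dxx t x v) (at x))
   \<and> continuous_on ({0..T} \<times> UNIV) (\<lambda>(t,x). \<eta> t x)
   \<and> continuous_on ({0..T} \<times> UNIV) (\<lambda>(t,x). \<eta>t t x)
   \<and> (\<forall>v. continuous_on ({0..T} \<times> UNIV) (\<lambda>(t,x). Dx t x v))
   \<and> (\<forall>v w. continuous_on ({0..T} \<times> UNIV) (\<lambda>(t,x). Dxx t x v w))"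

definition laplacian_of :: "('a::euclidean_space \<Rightarrow> 'a \<Rightarrow> real) \<Rightarrow> real" where
  "laplacian_of H = (\<Sum>b\<in>Basis. H b b)"

definition weak_solution ::
  "real \<Rightarrow> real \<Rightarrow> real \<Rightarrow> (real \<Rightarrow> real) \<Rightarrow> ('a::euclidean_space \<Rightarrow> real) \<Rightarrow> real
   \<Rightarrow> (real \<Rightarrow> 'a \<Rightarrow> real) \<Rightarrow> bool" where
  "weak_solution a \<gamma> \<alpha> F u0 T u \<longleftrightarrow>
     (\<lambda>z. indicator ({0<..<T} \<times> UNIV) z * u (fst z) (snd z)) \<in> borel_measurable (lborel \<Otimes>\<^sub>M lborel)
   \<and> (\<forall>K. compact K \<longrightarrow>
        (\<integral>\<^sup>+z\<in>{0<..<T} \<times> K. ennreal ((norm (snd z) powr (\<gamma>/\<alpha>) * \<bar>u (fst z) (snd z)\<bar>) powr \<alpha>)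
           \<partial>(lborel \<Otimes>\<^sub>M lborel)) < \<infinity>)
   \<and> (\<forall>T'\<in>{0..<T}. \<forall>\<eta> \<eta>t Dx Dxx.
        C12_with T \<eta> \<eta>t Dx Dxx \<and> (\<forall>t\<in>{0..T}. \<exists>K. compact K \<and> (\<forall>x. x \<notin> K \<longrightarrow> \<eta> t x = 0))
        \<longrightarrow>
        (let G = (\<lambda>z. u (fst z) (snd z) *
                    (\<eta>t (fst z) (snd z) + laplacian_of (Dxx (fst z) (snd z))
                     - a * norm (snd z) powr (-2) * \<eta> (fst z) (snd z))
                   + norm (snd z) powr \<gamma> * F (u (fst z) (snd z)) * \<eta> (fst z) (snd z))
         in integrable lborel (\<lambda>x. u T' x * \<eta> T' x)
          \<and> integrable lborel (\<lambda>x. u0 x * \<eta> 0 x)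
          \<and> set_integrable (lborel \<Otimes>\<^sub>M lborel) ({0..T'} \<times> UNIV) G
          \<and> (\<integral>x. u T' x * \<eta> T' x \<partial>lborel) - (\<integral>x. u0 x * \<eta> 0 x \<partial>lborel)
              = set_lebesgue_integral (lborel \<Otimes>\<^sub>M lborel) ({0..T'} \<times> UNIV) G))"

end

theory Submission
  imports Defs
begin

text \<open>Test the weak formulation on [0, T/2] with
  \<eta>(t,x) = (1 - 2t/T)^k \<phi>(x/\<surd>T)^l, which vanishes at t = T/2, so that the initial integral
  becomes minus the space-time integral of u (\<partial>_t \<eta> + \<Delta>\<eta> - a |x|^-2 \<eta>) + |x|^\<gamma> u^\<alpha> \<eta>.
  Young's inequality absorbs each of the three linear terms into the nonnegative nonlinear one
  and leaves the majorant T^(-\<alpha>/(\<alpha>-1)) |x|^-q + |a|^(\<alpha>/(\<alpha>-1)) |x|^-p on the ball of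
  radius \<surd>T, where q = \<gamma>/(\<alpha>-1) and p = (2\<alpha>+\<gamma>)/(\<alpha>-1). The hypotheses on d + \<gamma> say
  exactly that these powers are integrable at the origin (p only matters when a \<noteq> 0), and
  integrating the majorant over [0, T/2] \<times> B(0, \<surd>T) gives C T^(d/2 - (2+\<gamma>)/(2(\<alpha>-1))) by
  scaling.\<close>

section \<open>Integrability of \<open>norm x powr - p\<close> at the origin\<close>

lemma nn_integral_lborel_scaleR:
  fixes f :: "'a::euclidean_space \<Rightarrow> ennreal"
  assumes [measurable]: "f \<in> borel_measurable borel" and c: "c > 0"
  shows "(\<integral>\<^sup>+x. f x \<partial>lborel) = ennreal (c ^ DIM('a)) * (\<integral>\<^sup>+x. f (c *\<^sub>R x) \<partial>lborel)"
  using c by (subst lborel_affine[of c 0])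
    (simp_all add: nn_integral_density nn_integral_distr nn_integral_cmult abs_of_pos)

lemma nn_integral_norm_powr_scaleR:
  fixes A :: "'a::euclidean_space set"
  assumes [measurable]: "A \<in> sets borel" and c: "c > 0"
  shows "(\<integral>\<^sup>+x\<in>A. ennreal (norm x powr - p) \<partial>lborel)
       = ennreal (c powr (real DIM('a) - p)) * (\<integral>\<^sup>+x\<in>{x. c *\<^sub>R x \<in> A}. ennreal (norm x powr - p) \<partial>lborel)"
proof -
  have "(\<integral>\<^sup>+x\<in>A. ennreal (norm x powr - p) \<partial>lborel)
      = ennreal (c ^ DIM('a)) * (\<integral>\<^sup>+x. ennreal (norm (c *\<^sub>R x) powr - p) * indicator A (c *\<^sub>R x) \<partial>lborel)"
    using c by (intro nn_integral_lborel_scaleR) auto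
  also have "(\<lambda>x. ennreal (norm (c *\<^sub>R x) powr - p) * indicator A (c *\<^sub>R x))
      = (\<lambda>x. ennreal (c powr - p) * (ennreal (norm x powr - p) * indicator {x. c *\<^sub>R x \<in> A} x))"
    using c by (auto simp: powr_mult ennreal_mult indicator_def)
  also have "ennreal (c ^ DIM('a)) * (\<integral>\<^sup>+x. ennreal (c powr - p) * (ennreal (norm x powr - p) * indicator {x. c *\<^sub>R x \<in> A} x) \<partial>lborel)
      = ennreal (c ^ DIM('a) * c powr - p) * (\<integral>\<^sup>+x\<in>{x. c *\<^sub>R x \<in> A}. ennreal (norm x powr - p) \<partial>lborel)"
    using c by (simp add: nn_integral_cmult ennreal_mult mult.assoc)
  also have "c ^ DIM('a) * c powr - p = c powr (real DIM('a) - p)"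
    using c by (simp add: powr_diff powr_minus_divide powr_realpow divide_inverse)
  finally show ?thesis .
qed

lemma nn_integral_norm_powr_annulus_finite:
  assumes r: "r > 0"
  shows "(\<integral>\<^sup>+x\<in>cball (0::'a::euclidean_space) 1 - cball 0 r. ennreal (norm x powr - p) \<partial>lborel) < \<infinity>"
proof -
  have "(\<integral>\<^sup>+x\<in>cball (0::'a) 1 - cball 0 r. ennreal (norm x powr - p) \<partial>lborel)
      \<le> (\<integral>\<^sup>+x. ennreal (max 1 (r powr - p)) * indicator (cball (0::'a) 1) x \<partial>lborel)"
  proof (rule nn_integral_mono)
    fix x :: 'a
    have "norm x powr - p \<le> max 1 (r powr - p)" if "r < norm x" "norm x \<le> 1"
    proof (cases "p \<ge> 0")
      case True
      have "norm x powr - p \<le> r powr - p"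
        using True that r by (intro powr_mono2') auto
      then show ?thesis by simp
    next
      case False
      then have "norm x powr - p \<le> 1 powr - p" using that r by (intro powr_mono2) auto
      then show ?thesis by simp
    qed
    then show "ennreal (norm x powr - p) * indicator (cball 0 1 - cball 0 r) x
        \<le> ennreal (max 1 (r powr - p)) * indicator (cball 0 1) x"
      by (auto simp: indicator_def)
  qed
  also have "\<dots> = ennreal (max 1 (r powr - p)) * emeasure lborel (cball (0::'a) 1)"
    by (rule nn_integral_cmult_indicator) auto
  also have "\<dots> < \<infinity>"
    using emeasure_lborel_cball_finite[of "0::'a" 1] by (simp add: ennreal_mult_less_top)
  finally show ?thesis .
qed

lemma nn_integral_norm_powr_annulus_halve:
  assumes r: "0 < r" "r \<le> 1"
  shows "(\<integral>\<^sup>+x\<in>cball (0::'a::euclidean_space) 1 - cball 0 (r/2). ennreal (norm x powr - p) \<partial>lborel)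
       = (\<integral>\<^sup>+x\<in>cball (0::'a) 1 - cball 0 (1/2). ennreal (norm x powr - p) \<partial>lborel)
         + ennreal (2 powr (p - real DIM('a)))
           * (\<integral>\<^sup>+x\<in>cball (0::'a) 1 - cball 0 r. ennreal (norm x powr - p) \<partial>lborel)"
proof -
  let ?f = "\<lambda>x::'a. ennreal (norm x powr - p)"
  have [measurable]: "cball (0::'a) s \<in> sets borel" for s
    by (simp add: borel_closed)
  have "indicator (cball (0::'a) 1 - cball 0 (r/2)) x
      = indicator (cball 0 1 - cball 0 (1/2)) x + (indicator (cball 0 (1/2) - cball 0 (r/2)) x :: ennreal)" for x
    using r by (auto simp: indicator_def)
  then have "(\<integral>\<^sup>+x\<in>cball (0::'a) 1 - cball 0 (r/2). ?f x \<partial>lborel)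
      = (\<integral>\<^sup>+x\<in>cball (0::'a) 1 - cball 0 (1/2). ?f x \<partial>lborel)
        + (\<integral>\<^sup>+x\<in>cball (0::'a) (1/2) - cball 0 (r/2). ?f x \<partial>lborel)"
    by (simp add: distrib_left) (subst nn_integral_add; measurable)
  also have "(\<integral>\<^sup>+x\<in>cball (0::'a) (1/2) - cball 0 (r/2). ?f x \<partial>lborel)
      = ennreal ((1/2) powr (real DIM('a) - p)) * (\<integral>\<^sup>+x\<in>cball (0::'a) 1 - cball 0 r. ?f x \<partial>lborel)"
  proof -
    have "{x::'a. (1/2::real) *\<^sub>R x \<in> cball 0 (1/2) - cball 0 (r/2)} = cball 0 1 - cball 0 r"
      by auto
    then show ?thesis
      using nn_integral_norm_powr_scaleR[of "cball (0::'a) (1/2) - cball 0 (r/2)" "1/2" p] by simp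
  qed
  also have "(1/2::real) powr (real DIM('a) - p) = 2 powr (p - real DIM('a))"
    by (simp add: powr_divide powr_minus_divide[symmetric])
  finally show ?thesis .
qed

lemma nn_integral_norm_powr_dyadic_annuli_bounded:
  assumes p: "p < real DIM('a::euclidean_space)"
  obtains K where "\<And>n. (\<integral>\<^sup>+x\<in>cball (0::'a) 1 - cball 0 ((1/2)^n). ennreal (norm x powr - p) \<partial>lborel)
    \<le> ennreal K"
proof -
  let ?I = "\<lambda>r. \<integral>\<^sup>+x\<in>cball (0::'a) 1 - cball 0 r. ennreal (norm x powr - p) \<partial>lborel"
  define q where "q = (2::real) powr (p - real DIM('a))"
  have q: "0 \<le> q" "q < 1"
    using p unfolding q_def by (auto intro: powr_less_one)
  \<comment> \<open>\<open>q < 1\<close> because \<open>p < DIM('a)\<close>; \<open>K\<close> is the fixed point of the recursion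
    \<open>I (r/2) = I (1/2) + q * I r\<close>.\<close>
  define G where "G = enn2real (?I (1/2))"
  define K where "K = G / (1 - q)"
  have G: "?I (1/2) = ennreal G" "G \<ge> 0"
    using nn_integral_norm_powr_annulus_finite[of "1/2" p, where 'a='a] by (simp_all add: G_def)
  have K: "?I (1/2) + ennreal q * ennreal K = ennreal K"
  proof -
    have "G + q * K = K"
      using q unfolding K_def by (simp add: field_simps)
    with q G show ?thesis
      by (simp add: K_def ennreal_mult[symmetric] ennreal_plus[symmetric])
  qed
  have "?I ((1/2)^n) \<le> ennreal K" for n
  proof (induction n)
    case 0
    show ?case by simp
  next
    case (Suc n)
    have "?I ((1/2)^Suc n) = ?I (1/2) + ennreal q * ?I ((1/2)^n)"
      using nn_integral_norm_powr_annulus_halve[of "(1/2)^n" p, where 'a='a]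
      by (simp add: q_def power_le_one mult.commute)
    also have "\<dots> \<le> ?I (1/2) + ennreal q * ennreal K"
      using Suc by (intro add_left_mono mult_left_mono) auto
    finally show ?case using K by simp
  qed
  then show ?thesis
    by (rule that)
qed

lemma nn_integral_norm_powr_cball_finite:
  assumes p: "p < real DIM('a::euclidean_space)"
  shows "(\<integral>\<^sup>+x\<in>cball (0::'a) 1. ennreal (norm x powr - p) \<partial>lborel) < \<infinity>"
proof -
  obtain K where bound: "\<And>n. (\<integral>\<^sup>+x\<in>cball (0::'a) 1 - cball 0 ((1/2)^n). ennreal (norm x powr - p) \<partial>lborel)
      \<le> ennreal K"
    using nn_integral_norm_powr_dyadic_annuli_bounded[OF p] by blast
  \<comment> \<open>Since \<open>0 powr x = 0\<close> the origin carries no mass, and the punctured ball is the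
    increasing union of the dyadic annuli.\<close>
  have "(\<integral>\<^sup>+x\<in>cball (0::'a) 1. ennreal (norm x powr - p) \<partial>lborel)
      = emeasure (density lborel (\<lambda>x::'a. ennreal (norm x powr - p))) (\<Union>n. cball 0 1 - cball 0 ((1/2)^n))"
  proof -
    have "(\<Union>n. cball (0::'a) 1 - cball 0 ((1/2)^n)) = cball 0 1 - {0}"
    proof (intro equalityI subsetI)
      fix x :: 'a assume "x \<in> cball 0 1 - {0}"
      moreover obtain n where "\<not> norm x \<le> (1/2::real)^n"
        using real_arch_pow_inv[of "norm x" "1/2"] \<open>x \<in> cball 0 1 - {0}\<close> by (auto simp: not_le)
      ultimately show "x \<in> (\<Union>n. cball 0 1 - cball 0 ((1/2)^n))" by auto
    qed auto
    moreover have "indicator (cball (0::'a) 1) x * ennreal (norm x powr - p)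
        = indicator (cball 0 1 - {0}) x * ennreal (norm x powr - p)" for x :: 'a
      by (cases "x = 0") (auto simp: indicator_def)
    ultimately show ?thesis
      by (simp add: emeasure_density mult.commute)
  qed
  also have "\<dots> = (SUP n. \<integral>\<^sup>+x\<in>cball (0::'a) 1 - cball 0 ((1/2)^n). ennreal (norm x powr - p) \<partial>lborel)"
  proof (subst SUP_emeasure_incseq[symmetric])
    show "incseq (\<lambda>n. cball (0::'a) 1 - cball 0 ((1/2)^n))"
      by (intro incseq_SucI Diff_mono order_refl subset_cball) simp
  qed (auto simp: emeasure_density)
  also have "\<dots> \<le> ennreal K"
    using bound by (rule SUP_least)
  finally show ?thesis
    by (metis ennreal_less_top infinity_ennreal_def le_less_trans)
qed

lemma nn_integral_norm_powr_cball:
  assumes R: "R > 0" and p: "p < real DIM('a::euclidean_space)"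
  shows "(\<integral>\<^sup>+x\<in>cball (0::'a) R. ennreal (norm x powr - p) \<partial>lborel)
       = ennreal (R powr (real DIM('a) - p)
                  * enn2real (\<integral>\<^sup>+x\<in>cball (0::'a) 1. ennreal (norm x powr - p) \<partial>lborel))"
proof -
  have "{x::'a. R *\<^sub>R x \<in> cball 0 R} = cball 0 1"
    using R by (auto simp: mult_le_cancel_left1)
  then show ?thesis
    using nn_integral_norm_powr_scaleR[of "cball (0::'a) R" R p] R nn_integral_norm_powr_cball_finite[OF p]
    by (simp add: borel_closed ennreal_mult)
qed

section \<open>Absorbing linear terms by Young's inequality\<close>

lemma young_absorb:
  fixes \<alpha> v A B :: real
  assumes \<alpha>: "\<alpha> > 1" and "v \<ge> 0" "A \<ge> 0" "B > 0"
  shows "v * A - B * v powr \<alpha> \<le> A powr (\<alpha> / (\<alpha> - 1)) * B powr (- 1 / (\<alpha> - 1))"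
proof -
  define q where "q = \<alpha> / (\<alpha> - 1)"
  have q: "q > 1" "1 / \<alpha> + 1 / q = 1"
    using \<alpha> unfolding q_def by (auto simp: field_simps)
  define x where "x = v * B powr (1 / \<alpha>)"
  define y where "y = A * B powr (- 1 / \<alpha>)"
  have "x * y = v * A"
    using assms by (simp add: x_def y_def powr_minus_divide field_simps)
  moreover have "x powr \<alpha> = B * v powr \<alpha>"
    using assms by (simp add: x_def powr_mult powr_powr)
  moreover have "y powr q = A powr q * B powr (- 1 / (\<alpha> - 1))"
    using assms by (simp add: y_def q_def powr_mult powr_powr)
  moreover have "x * y \<le> x powr \<alpha> / \<alpha> + y powr q / q"
    using assms q by (intro Youngs_inequality) (auto simp: x_def y_def)
  moreover have "x powr \<alpha> / \<alpha> \<le> x powr \<alpha>" "y powr q / q \<le> y powr q"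
    using \<alpha> q by (simp_all add: divide_le_eq mult_le_cancel_left1)
  ultimately show ?thesis
    unfolding q_def by linarith
qed

lemma young_absorb_monomial:
  fixes \<alpha> \<gamma> \<epsilon> c \<sigma> \<Phi> r v k l j m n :: real
  assumes \<alpha>: "\<alpha> > 1" and "\<epsilon> > 0" "c \<ge> 0" "v \<ge> 0" "r > 0"
    and \<sigma>: "0 < \<sigma>" "\<sigma> \<le> 1" and \<Phi>: "0 < \<Phi>" "\<Phi> \<le> 1"
    and jk: "\<alpha> / (\<alpha> - 1) * j \<le> k" and ml: "\<alpha> / (\<alpha> - 1) * m \<le> l"
  shows "v * (c * \<sigma> powr (k - j) * \<Phi> powr (l - m) * r powr n)
           - \<epsilon> * (r powr \<gamma> * \<sigma> powr k * \<Phi> powr l) * v powr \<alpha>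
         \<le> \<epsilon> powr (- 1 / (\<alpha> - 1)) * c powr (\<alpha> / (\<alpha> - 1)) * r powr ((\<alpha> * n - \<gamma>) / (\<alpha> - 1))"
proof (cases "c = 0")
  case True
  then show ?thesis using assms by simp
next
  case False
  define A where "A = c * \<sigma> powr (k - j) * \<Phi> powr (l - m) * r powr n"
  define B where "B = \<epsilon> * (r powr \<gamma> * \<sigma> powr k * \<Phi> powr l)"
  have "v * A - B * v powr \<alpha> \<le> A powr (\<alpha> / (\<alpha> - 1)) * B powr (- 1 / (\<alpha> - 1))"
    using assms by (intro young_absorb) (auto simp: A_def B_def)
  also have "A powr (\<alpha> / (\<alpha> - 1)) * B powr (- 1 / (\<alpha> - 1))
      = \<epsilon> powr (- 1 / (\<alpha> - 1)) * c powr (\<alpha> / (\<alpha> - 1)) * r powr ((\<alpha> * n - \<gamma>) / (\<alpha> - 1))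
        * \<sigma> powr (k - \<alpha> / (\<alpha> - 1) * j) * \<Phi> powr (l - \<alpha> / (\<alpha> - 1) * m)"
  proof -
    have "\<alpha> - 1 \<noteq> 0" using \<alpha> by simp
    then show ?thesis
      using assms False
      by (simp add: A_def B_def powr_def ln_mult exp_add[symmetric])
        (simp add: divide_simps; simp add: algebra_simps)
  qed
  also have "\<dots> \<le> \<epsilon> powr (- 1 / (\<alpha> - 1)) * c powr (\<alpha> / (\<alpha> - 1)) * r powr ((\<alpha> * n - \<gamma>) / (\<alpha> - 1))"
  proof -
    have "\<sigma> powr (k - \<alpha> / (\<alpha> - 1) * j) * \<Phi> powr (l - \<alpha> / (\<alpha> - 1) * m) \<le> 1"
      using \<sigma> \<Phi> jk ml by (intro mult_le_one powr_le1) auto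
    from mult_left_le[OF this, of "\<epsilon> powr (- 1 / (\<alpha> - 1)) * c powr (\<alpha> / (\<alpha> - 1)) * r powr ((\<alpha> * n - \<gamma>) / (\<alpha> - 1))"]
    show ?thesis
      by (simp add: mult.assoc)
  qed
  finally show ?thesis
    unfolding A_def B_def .
qed

lemma neg_linear_terms_le:
  fixes a l T \<sigma> \<Phi> r N1 N2 M1 M2 :: real and k :: nat
  assumes T: "T > 0" and \<sigma>: "0 \<le> \<sigma>" and \<Phi>: "0 < \<Phi>" "\<Phi> \<le> 1" and l: "l > 2"
    and N: "0 \<le> N1" "N1 \<le> M1" "\<bar>N2\<bar> \<le> M2"
  shows "- (- (2 * real k / T) * \<sigma> ^ (k - 1) * \<Phi> powr l
            + \<sigma> ^ k / T * (l * (l - 1) * \<Phi> powr (l - 2) * N1 + l * \<Phi> powr (l - 1) * N2)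
            - a * r powr - 2 * (\<sigma> ^ k * \<Phi> powr l))
         \<le> 2 * real k / T * \<sigma> ^ (k - 1) * \<Phi> powr l
           + (l * (l - 1) * M1 + l * M2) / T * \<sigma> ^ k * \<Phi> powr (l - 2)
           + \<bar>a\<bar> * \<sigma> ^ k * \<Phi> powr l * r powr - 2"
proof -
  have "\<Phi> powr (l - 1) \<le> \<Phi> powr (l - 2)"
    using \<Phi> by (intro powr_mono') auto
  then have "\<bar>l * (l - 1) * \<Phi> powr (l - 2) * N1 + l * \<Phi> powr (l - 1) * N2\<bar>
      \<le> l * (l - 1) * \<Phi> powr (l - 2) * M1 + l * \<Phi> powr (l - 2) * M2"
    using N l by (intro abs_triangle_ineq[THEN order.trans] add_mono)
      (auto simp: abs_mult intro!: mult_left_mono mult_mono)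
  then have "- (l * (l - 1) * \<Phi> powr (l - 2) * N1 + l * \<Phi> powr (l - 1) * N2)
      \<le> (l * (l - 1) * M1 + l * M2) * \<Phi> powr (l - 2)"
    by (simp add: algebra_simps)
  then have "\<sigma> ^ k / T * - (l * (l - 1) * \<Phi> powr (l - 2) * N1 + l * \<Phi> powr (l - 1) * N2)
      \<le> \<sigma> ^ k / T * ((l * (l - 1) * M1 + l * M2) * \<Phi> powr (l - 2))"
    using \<sigma> T by (intro mult_left_mono) auto
  also have "\<dots> = (l * (l - 1) * M1 + l * M2) / T * \<sigma> ^ k * \<Phi> powr (l - 2)"
    by simp
  finally have "- (\<sigma> ^ k / T * (l * (l - 1) * \<Phi> powr (l - 2) * N1 + l * \<Phi> powr (l - 1) * N2))
      \<le> (l * (l - 1) * M1 + l * M2) / T * \<sigma> ^ k * \<Phi> powr (l - 2)"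
    by (simp add: algebra_simps)
  moreover have "a * r powr - 2 * (\<sigma> ^ k * \<Phi> powr l) \<le> \<bar>a\<bar> * \<sigma> ^ k * \<Phi> powr l * r powr - 2"
    using \<sigma> mult_right_mono[OF abs_ge_self, of "r powr - 2 * (\<sigma> ^ k * \<Phi> powr l)" a]
    by (simp add: mult_ac)
  ultimately show ?thesis
    by simp
qed

lemma neg_integrand_young_bound:
  fixes \<alpha> \<gamma> a l T \<sigma> \<Phi> r v N1 N2 M1 M2 :: real and k :: nat
  assumes \<alpha>: "\<alpha> > 1" and T: "T > 0" and \<sigma>: "0 \<le> \<sigma>" "\<sigma> \<le> 1" and \<Phi>: "0 \<le> \<Phi>" "\<Phi> \<le> 1"
    and r: "r > 0" and v: "v \<ge> 0"
    and k: "real k \<ge> \<alpha> / (\<alpha> - 1)" and l: "l \<ge> 2 * \<alpha> / (\<alpha> - 1)"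
    and N: "0 \<le> N1" "N1 \<le> M1" "\<bar>N2\<bar> \<le> M2"
  shows "- (v * (- (2 * real k / T) * \<sigma> ^ (k - 1) * \<Phi> powr l
                + \<sigma> ^ k / T * (l * (l - 1) * \<Phi> powr (l - 2) * N1 + l * \<Phi> powr (l - 1) * N2)
                - a * r powr - 2 * (\<sigma> ^ k * \<Phi> powr l))
            + r powr \<gamma> * v powr \<alpha> * (\<sigma> ^ k * \<Phi> powr l))
         \<le> 3 powr (1 / (\<alpha> - 1))
           * (((2 * real k) powr (\<alpha> / (\<alpha> - 1)) + (l * (l - 1) * M1 + l * M2) powr (\<alpha> / (\<alpha> - 1)))
                * T powr - (\<alpha> / (\<alpha> - 1)) * r powr - (\<gamma> / (\<alpha> - 1))
              + \<bar>a\<bar> powr (\<alpha> / (\<alpha> - 1)) * r powr - ((2 * \<alpha> + \<gamma>) / (\<alpha> - 1)))"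
    (is "?lhs \<le> ?rhs")
proof -
  have a'_gt_1: "\<alpha> / (\<alpha> - 1) > 1"
    using \<alpha> by simp
  then have k2: "k \<ge> 2" and l2: "l > 2"
    using k l by linarith+
  define M where "M = l * (l - 1) * M1 + l * M2"
  have M: "M \<ge> 0"
    using N l2 unfolding M_def by (intro add_nonneg_nonneg mult_nonneg_nonneg) auto
  consider "\<sigma> = 0 \<or> \<Phi> = 0" | "\<sigma> > 0" "\<Phi> > 0"
    using \<sigma> \<Phi> by linarith
  then show ?thesis
  proof cases
    case 1
    then have "?lhs = 0"
      using k2 by (auto simp: power_0_left)
    also have "0 \<le> ?rhs"
      using M unfolding M_def by (intro mult_nonneg_nonneg add_nonneg_nonneg) auto
    finally show ?thesis .
  next
    case 2
    define B where "B = r powr \<gamma> * \<sigma> powr real k * \<Phi> powr l"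
    have \<sigma>_pow: "\<sigma> ^ k = \<sigma> powr real k" "\<sigma> ^ (k - 1) = \<sigma> powr (real k - 1)"
      using 2 k2 by (simp_all add: powr_realpow[symmetric])
    \<comment> \<open>Each linear term, written as \<open>c * \<sigma> powr (k - j) * \<Phi> powr (l - m) * r powr n\<close>, absorbs a
      third of the nonlinear term \<open>B * v powr \<alpha>\<close>.\<close>
    have "?lhs \<le> (v * (2 * real k / T * \<sigma> powr (real k - 1) * \<Phi> powr (l - 0) * r powr 0) - 1/3 * B * v powr \<alpha>)
                 + (v * (M / T * \<sigma> powr (real k - 0) * \<Phi> powr (l - 2) * r powr 0) - 1/3 * B * v powr \<alpha>)
                 + (v * (\<bar>a\<bar> * \<sigma> powr (real k - 0) * \<Phi> powr (l - 0) * r powr - 2) - 1/3 * B * v powr \<alpha>)"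
      using mult_left_mono[OF neg_linear_terms_le[OF T \<sigma>(1) 2(2) \<Phi>(2) l2 N, of k a r] v] r
      unfolding B_def M_def \<sigma>_pow by (simp add: algebra_simps)
    also have "\<dots> \<le> 3 powr (1 / (\<alpha> - 1)) * (2 * real k / T) powr (\<alpha> / (\<alpha> - 1)) * r powr ((\<alpha> * 0 - \<gamma>) / (\<alpha> - 1))
                   + 3 powr (1 / (\<alpha> - 1)) * (M / T) powr (\<alpha> / (\<alpha> - 1)) * r powr ((\<alpha> * 0 - \<gamma>) / (\<alpha> - 1))
                   + 3 powr (1 / (\<alpha> - 1)) * \<bar>a\<bar> powr (\<alpha> / (\<alpha> - 1)) * r powr ((\<alpha> * - 2 - \<gamma>) / (\<alpha> - 1))"
    proof -
      have three: "(1/3::real) powr (- 1 / (\<alpha> - 1)) = 3 powr (1 / (\<alpha> - 1))"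
        by (simp add: powr_divide powr_minus_divide)
      show ?thesis
        unfolding B_def three[symmetric] using assms 2 M l2
        by (intro add_mono young_absorb_monomial) (auto simp: field_simps)
    qed
    also have "\<dots> = ?rhs"
    proof -
      have exponent: "(\<alpha> * - 2 - \<gamma>) / (\<alpha> - 1) = - ((2 * \<alpha> + \<gamma>) / (\<alpha> - 1))"
        unfolding minus_divide_left by (simp add: algebra_simps)
      show ?thesis
        using T M unfolding M_def exponent
        by (simp add: powr_divide powr_minus_divide algebra_simps)
    qed
    finally show ?thesis .
  qed
qed

section \<open>The test function\<close>

text \<open>For \<open>z < 0\<close>, \<open>z powr m\<close> is the junk value \<open>exp (m * ln z)\<close>. The positive-part power is
  \<open>C\<^sup>1\<close> on all of \<open>\<real>\<close> for \<open>m > 1\<close>, which makes \<open>\<phi>\<^sup>l\<close> a \<open>C\<^sup>2\<close> function although \<open>\<phi>\<close> vanishes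
  outside the unit ball.\<close>

definition pos_powr :: "real \<Rightarrow> real \<Rightarrow> real" where
  "pos_powr z m = max z 0 powr m"

lemma pos_powr_eq_powr [simp]: "z \<ge> 0 \<Longrightarrow> pos_powr z m = z powr m"
  by (simp add: pos_powr_def)

lemma continuous_on_pos_powr [continuous_intros]:
  "continuous_on S f \<Longrightarrow> m > 0 \<Longrightarrow> continuous_on S (\<lambda>x. pos_powr (f x) m)"
  unfolding pos_powr_def by (intro continuous_intros continuous_on_powr') auto

lemma has_real_derivative_pos_powr_0:
  assumes m: "m > 1"
  shows "((\<lambda>z. pos_powr z m) has_real_derivative 0) (at 0)"
proof -
  have bound: "norm ((pos_powr y m - pos_powr 0 m) / (y - 0)) \<le> \<bar>y\<bar> powr (m - 1)" for y
  proof (cases "y > 0")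
    case True
    then show ?thesis by (simp add: pos_powr_def powr_diff)
  next
    case False
    then show ?thesis using m by (simp add: pos_powr_def max_def)
  qed
  have "((\<lambda>y. \<bar>y\<bar> powr (m - 1)) \<longlongrightarrow> 0) (at 0)"
    using m by (intro tendsto_zero_powrI) (auto intro!: tendsto_eq_intros)
  with always_eventually[OF allI[OF bound]]
  have "((\<lambda>y. (pos_powr y m - pos_powr 0 m) / (y - 0)) \<longlongrightarrow> 0) (at 0)"
    by (rule Lim_null_comparison)
  then show ?thesis
    by (simp add: has_field_derivative_iff)
qed

lemma has_real_derivative_pos_powr:
  assumes m: "m > 1"
  shows "((\<lambda>z. pos_powr z m) has_real_derivative m * pos_powr z (m - 1)) (at z)"
proof -
  consider "z > 0" | "z < 0" | "z = 0"
    by linarith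
  then show ?thesis
  proof cases
    case 1
    have "((\<lambda>z. z powr m) has_real_derivative m * z powr (m - 1)) (at z)"
      using 1 by (rule has_real_derivative_powr)
    then have "((\<lambda>z. z powr m) has_real_derivative m * pos_powr z (m - 1)) (at z)"
      using 1 by simp
    then show ?thesis
      by (rule has_field_derivative_transform_within_open[where S = "{0<..}"]) (use 1 in auto)
  next
    case 2
    have "((\<lambda>z. 0) has_real_derivative m * pos_powr z (m - 1)) (at z)"
      using 2 by (simp add: pos_powr_def)
    then show ?thesis
      by (rule has_field_derivative_transform_within_open[where S = "{..<0}"])
        (use 2 m in \<open>auto simp: pos_powr_def max_def\<close>)
  next
    case 3
    then show ?thesis
      using has_real_derivative_pos_powr_0[OF m] m by (simp add: pos_powr_def)
  qed
qed

lemma has_derivative_pos_powr: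
  assumes "(g has_derivative g') (at x)" "m > 1"
  shows "((\<lambda>x. pos_powr (g x) m) has_derivative (\<lambda>v. m * pos_powr (g x) (m - 1) * g' v)) (at x)"
  using has_derivative_compose[OF assms(1) has_real_derivative_pos_powr[OF assms(2), of "g x",
      unfolded has_field_derivative_def]]
  by (simp add: mult_ac)

definition dir_deriv :: "('a::euclidean_space \<Rightarrow> real) \<Rightarrow> 'a \<Rightarrow> 'a \<Rightarrow> real" where
  "dir_deriv f v x = frechet_derivative f (at x) v"

lemma smooth_fun_dir_deriv: "smooth_fun f \<Longrightarrow> smooth_fun (dir_deriv f v)"
  by (auto elim: smooth_fun.cases simp: dir_deriv_def[abs_def])

lemma has_derivative_smooth_fun:
  "smooth_fun f \<Longrightarrow> (f has_derivative (\<lambda>v. dir_deriv f v x)) (at x)"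
  by (auto elim!: smooth_fun.cases simp: dir_deriv_def frechet_derivative_works[symmetric])

lemma continuous_on_smooth_fun: "smooth_fun f \<Longrightarrow> continuous_on S f"
  using has_derivative_smooth_fun
  by (metis continuous_at_imp_continuous_on has_derivative_continuous)

lemma has_derivative_smooth_fun_rescale:
  assumes f: "smooth_fun f" and s: "s > 0"
  shows "((\<lambda>x. f (x /\<^sub>R s)) has_derivative (\<lambda>v. dir_deriv f v (x /\<^sub>R s) / s)) (at x)"
proof -
  have "linear (\<lambda>v. dir_deriv f v (x /\<^sub>R s))"
    using has_derivative_smooth_fun[OF f] by (rule has_derivative_linear)
  from linear.scaleR[OF this, of "inverse s"]
  have "dir_deriv f (v /\<^sub>R s) (x /\<^sub>R s) = dir_deriv f v (x /\<^sub>R s) / s" for v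
    by (simp add: divide_inverse_commute)
  moreover have "((\<lambda>x. f (x /\<^sub>R s)) has_derivative (\<lambda>v. dir_deriv f (v /\<^sub>R s) (x /\<^sub>R s))) (at x)"
    by (rule has_derivative_compose[OF _ has_derivative_smooth_fun[OF f]])
      (auto intro!: derivative_eq_intros)
  ultimately show ?thesis
    by simp
qed

lemma continuous_nonzero_subset_ball:
  fixes f :: "'a::{real_normed_vector, perfect_space} \<Rightarrow> real"
  assumes "continuous_on UNIV f" "closure {x. f x \<noteq> 0} \<subseteq> cball c r"
  shows "{x. f x \<noteq> 0} \<subseteq> ball c r"
proof -
  have "open {x. f x \<noteq> 0}"
    using assms(1) by (simp add: open_Collect_neq continuous_on_const)
  then have "{x. f x \<noteq> 0} \<subseteq> interior (closure {x. f x \<noteq> 0})"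
    by (meson closure_subset interior_maximal)
  also have "\<dots> \<subseteq> ball c r"
    using interior_mono[OF assms(2)] by (simp add: interior_cball)
  finally show ?thesis .
qed

lemma rescaled_support_outside:
  assumes "{y. \<phi> y \<noteq> 0} \<subseteq> ball 0 1" "T > 0" "norm x \<ge> sqrt T"
  shows "\<phi> (x /\<^sub>R sqrt T) = 0"
proof (rule ccontr)
  assume "\<phi> (x /\<^sub>R sqrt T) \<noteq> 0"
  then have "norm (x /\<^sub>R sqrt T) < 1"
    using assms(1) by auto
  then have "sqrt T * norm (x /\<^sub>R sqrt T) < sqrt T * 1"
    using assms(2) by (intro mult_strict_left_mono) auto
  moreover have "sqrt T * norm (x /\<^sub>R sqrt T) = norm x"
    using assms(2) by simp
  ultimately show False
    using assms(3) by linarith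
qed

definition test_fn :: "real \<Rightarrow> nat \<Rightarrow> real \<Rightarrow> ('a::euclidean_space \<Rightarrow> real) \<Rightarrow> real \<Rightarrow> 'a \<Rightarrow> real" where
  "test_fn T k l \<phi> t x = (1 - 2 * t / T) ^ k * pos_powr (\<phi> (x /\<^sub>R sqrt T)) l"

definition test_fn_dt :: "real \<Rightarrow> nat \<Rightarrow> real \<Rightarrow> ('a::euclidean_space \<Rightarrow> real) \<Rightarrow> real \<Rightarrow> 'a \<Rightarrow> real" where
  "test_fn_dt T k l \<phi> t x = - (2 * real k / T) * (1 - 2 * t / T) ^ (k - 1) * pos_powr (\<phi> (x /\<^sub>R sqrt T)) l"

definition test_fn_grad ::
  "real \<Rightarrow> nat \<Rightarrow> real \<Rightarrow> ('a::euclidean_space \<Rightarrow> real) \<Rightarrow> real \<Rightarrow> 'a \<Rightarrow> 'a \<Rightarrow> real" where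
  "test_fn_grad T k l \<phi> t x v = (1 - 2 * t / T) ^ k / sqrt T
     * (l * pos_powr (\<phi> (x /\<^sub>R sqrt T)) (l - 1) * dir_deriv \<phi> v (x /\<^sub>R sqrt T))"

definition test_fn_hess ::
  "real \<Rightarrow> nat \<Rightarrow> real \<Rightarrow> ('a::euclidean_space \<Rightarrow> real) \<Rightarrow> real \<Rightarrow> 'a \<Rightarrow> 'a \<Rightarrow> 'a \<Rightarrow> real" where
  "test_fn_hess T k l \<phi> t x v w = (1 - 2 * t / T) ^ k / T
     * (l * (l - 1) * pos_powr (\<phi> (x /\<^sub>R sqrt T)) (l - 2)
          * dir_deriv \<phi> w (x /\<^sub>R sqrt T) * dir_deriv \<phi> v (x /\<^sub>R sqrt T)
        + l * pos_powr (\<phi> (x /\<^sub>R sqrt T)) (l - 1) * dir_deriv (dir_deriv \<phi> v) w (x /\<^sub>R sqrt T))"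

lemma has_real_derivative_test_fn:
  assumes "T > 0"
  shows "((\<lambda>t. test_fn T k l \<phi> t x) has_real_derivative test_fn_dt T k l \<phi> t x) (at t within S)"
proof -
  have "((\<lambda>t. 1 - 2 * t / T) has_real_derivative - (2 / T)) (at t within S)"
    using assms by (auto intro!: derivative_eq_intros)
  from DERIV_cmult_right[OF DERIV_power[OF this, of k], of "pos_powr (\<phi> (x /\<^sub>R sqrt T)) l"]
  show ?thesis
    unfolding test_fn_def test_fn_dt_def by (simp add: mult_ac)
qed

lemma has_derivative_pos_powr_rescale:
  assumes "smooth_fun \<phi>" "s > 0" "m > 1"
  shows "((\<lambda>x. pos_powr (\<phi> (x /\<^sub>R s)) m) has_derivative
      (\<lambda>v. m * pos_powr (\<phi> (x /\<^sub>R s)) (m - 1) * (dir_deriv \<phi> v (x /\<^sub>R s) / s))) (at x)"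
  using assms by (intro has_derivative_pos_powr has_derivative_smooth_fun_rescale)

lemma has_derivative_test_fn:
  assumes \<phi>: "smooth_fun \<phi>" and T: "T > 0" and l: "l > 1"
  shows "(test_fn T k l \<phi> t has_derivative test_fn_grad T k l \<phi> t x) (at x)"
  using has_derivative_mult_right[OF has_derivative_pos_powr_rescale[OF \<phi> real_sqrt_gt_zero[OF T] l],
      of "(1 - 2 * t / T) ^ k"]
  unfolding test_fn_def test_fn_grad_def
  by (rule has_derivative_eq_rhs) (auto simp: fun_eq_iff divide_inverse mult_ac)

lemma has_derivative_test_fn_grad:
  assumes \<phi>: "smooth_fun \<phi>" and T: "T > 0" and l: "l > 2"
  shows "((\<lambda>y. test_fn_grad T k l \<phi> t y v) has_derivative test_fn_hess T k l \<phi> t x v) (at x)"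
proof -
  define s where "s = sqrt T"
  have s: "s > 0" "s * s = T"
    using T unfolding s_def by auto
  define c where "c = (1 - 2 * t / T) ^ k"
  have l1: "l - 1 > 1"
    using l by simp
  have "((\<lambda>y. c / s * (l * pos_powr (\<phi> (y /\<^sub>R s)) (l - 1) * dir_deriv \<phi> v (y /\<^sub>R s))) has_derivative
      (\<lambda>w. c / (s * s) * (l * (l - 1) * pos_powr (\<phi> (x /\<^sub>R s)) (l - 2)
          * dir_deriv \<phi> w (x /\<^sub>R s) * dir_deriv \<phi> v (x /\<^sub>R s)
        + l * pos_powr (\<phi> (x /\<^sub>R s)) (l - 1) * dir_deriv (dir_deriv \<phi> v) w (x /\<^sub>R s)))) (at x)"
    using has_derivative_mult_right[OF has_derivative_mult[OF
        has_derivative_mult_right[OF has_derivative_pos_powr_rescale[OF \<phi> s(1) l1], of l]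
        has_derivative_smooth_fun_rescale[OF smooth_fun_dir_deriv[OF \<phi>] s(1)]], of "c / s"]
    by (rule has_derivative_eq_rhs) (use s in \<open>simp add: fun_eq_iff field_simps\<close>)
  then show ?thesis
    unfolding test_fn_grad_def test_fn_hess_def s_def[symmetric] s(2) c_def .
qed

lemma C12_with_test_fn:
  assumes \<phi>: "smooth_fun \<phi>" and T: "T > 0" and l: "l > 2"
  shows "C12_with T (test_fn T k l \<phi>) (test_fn_dt T k l \<phi>) (test_fn_grad T k l \<phi>) (test_fn_hess T k l \<phi>)"
proof -
  have cont: "continuous_on S (\<lambda>z::real \<times> 'a. f (snd z /\<^sub>R sqrt T))" if "smooth_fun f" for f S
    by (rule continuous_on_compose2[OF continuous_on_smooth_fun[OF that, of UNIV]])
      (auto intro!: continuous_intros)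
  note cont = cont[OF \<phi>] cont[OF smooth_fun_dir_deriv[OF \<phi>]]
    cont[OF smooth_fun_dir_deriv[OF smooth_fun_dir_deriv[OF \<phi>]]]
  have "continuous_on S (\<lambda>z. test_fn T k l \<phi> (fst z) (snd z))"
    and "continuous_on S (\<lambda>z. test_fn_dt T k l \<phi> (fst z) (snd z))"
    and "continuous_on S (\<lambda>z. test_fn_grad T k l \<phi> (fst z) (snd z) v)"
    and "continuous_on S (\<lambda>z. test_fn_hess T k l \<phi> (fst z) (snd z) v w)" for S v w
    unfolding test_fn_def test_fn_dt_def test_fn_grad_def test_fn_hess_def
    using l T by (intro continuous_intros cont; simp)+
  moreover have "l > 1"
    using l by simp
  ultimately show ?thesis
    using has_real_derivative_test_fn[OF T] has_derivative_test_fn[OF \<phi> T \<open>l > 1\<close>]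
      has_derivative_test_fn_grad[OF \<phi> T l]
    unfolding C12_with_def case_prod_unfold by blast
qed

lemma laplacian_test_fn_hess:
  "laplacian_of (test_fn_hess T k l \<phi> t x) = (1 - 2 * t / T) ^ k / T
     * (l * (l - 1) * pos_powr (\<phi> (x /\<^sub>R sqrt T)) (l - 2) * (\<Sum>b\<in>Basis. dir_deriv \<phi> b (x /\<^sub>R sqrt T) ^ 2)
        + l * pos_powr (\<phi> (x /\<^sub>R sqrt T)) (l - 1)
            * laplacian_of (\<lambda>v w. dir_deriv (dir_deriv \<phi> v) w (x /\<^sub>R sqrt T)))"
  unfolding laplacian_of_def test_fn_hess_def
  by (simp add: distrib_left sum.distrib sum_distrib_left power2_eq_square mult_ac)

section \<open>Testing the weak formulation\<close>

text \<open>The integrand \<open>G\<close> bound by \<open>let\<close> in the definition of \<open>weak_solution\<close>.\<close>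

definition weak_integrand ::
  "real \<Rightarrow> real \<Rightarrow> (real \<Rightarrow> real) \<Rightarrow> (real \<Rightarrow> 'a::euclidean_space \<Rightarrow> real) \<Rightarrow> (real \<Rightarrow> 'a \<Rightarrow> real)
   \<Rightarrow> (real \<Rightarrow> 'a \<Rightarrow> real) \<Rightarrow> (real \<Rightarrow> 'a \<Rightarrow> 'a \<Rightarrow> 'a \<Rightarrow> real) \<Rightarrow> real \<times> 'a \<Rightarrow> real" where
  "weak_integrand a \<gamma> F u \<eta> \<eta>t Dxx z =
     u (fst z) (snd z) * (\<eta>t (fst z) (snd z) + laplacian_of (Dxx (fst z) (snd z))
                          - a * norm (snd z) powr (-2) * \<eta> (fst z) (snd z))
     + norm (snd z) powr \<gamma> * F (u (fst z) (snd z)) * \<eta> (fst z) (snd z)"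

lemma weak_solutionD:
  assumes "weak_solution a \<gamma> \<alpha> F u0 T u" "T' \<in> {0..<T}" "C12_with T \<eta> \<eta>t Dx Dxx"
    and "\<forall>t\<in>{0..T}. \<exists>K. compact K \<and> (\<forall>x. x \<notin> K \<longrightarrow> \<eta> t x = 0)"
  shows "(\<integral>x. u T' x * \<eta> T' x \<partial>lborel) - (\<integral>x. u0 x * \<eta> 0 x \<partial>lborel)
       = set_lebesgue_integral (lborel \<Otimes>\<^sub>M lborel) ({0..T'} \<times> UNIV) (weak_integrand a \<gamma> F u \<eta> \<eta>t Dxx)"
  using assms unfolding weak_solution_def weak_integrand_def[abs_def] Let_def by blast

lemma initial_integral_eq_neg_weak_integral:
  fixes \<phi> :: "'a::euclidean_space \<Rightarrow> real" and k :: nat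
  assumes ws: "weak_solution a \<gamma> \<alpha> F u0 T u" and T: "T > 0" and \<phi>: "smooth_fun \<phi>"
    and \<phi>_range: "\<forall>y. 0 \<le> \<phi> y \<and> \<phi> y \<le> 1" and \<phi>_supp: "{y. \<phi> y \<noteq> 0} \<subseteq> ball 0 1"
    and k: "k \<ge> 1" and l: "l > 2"
  shows "set_lebesgue_integral lborel (ball 0 (sqrt T)) (\<lambda>x. u0 x * \<phi> (x /\<^sub>R sqrt T) powr l)
       = - set_lebesgue_integral (lborel \<Otimes>\<^sub>M lborel) ({0..T/2} \<times> UNIV)
             (weak_integrand a \<gamma> F u (test_fn T k l \<phi>) (test_fn_dt T k l \<phi>) (test_fn_hess T k l \<phi>))"
proof -
  note outside = rescaled_support_outside[OF \<phi>_supp T]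
  have supp: "\<forall>t\<in>{0..T}. \<exists>K. compact K \<and> (\<forall>x. x \<notin> K \<longrightarrow> test_fn T k l \<phi> t x = 0)"
    using outside by (auto simp: test_fn_def intro!: exI[of _ "cball 0 (sqrt T)"])
  have "test_fn T k l \<phi> (T/2) x = 0" for x
    using T k by (simp add: test_fn_def)
  moreover have "set_lebesgue_integral lborel (ball 0 (sqrt T)) (\<lambda>x. u0 x * \<phi> (x /\<^sub>R sqrt T) powr l)
      = (\<integral>x. u0 x * test_fn T k l \<phi> 0 x \<partial>lborel)"
    unfolding set_lebesgue_integral_def using \<phi>_range outside
    by (intro Bochner_Integration.integral_cong) (auto simp: test_fn_def indicator_def not_less)
  ultimately show ?thesis
    using weak_solutionD[OF ws _ C12_with_test_fn[OF \<phi> T l] supp, of "T/2"] T by simp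
qed

lemma neg_weak_integrand_test_fn_le:
  fixes \<phi> :: "'a::euclidean_space \<Rightarrow> real" and k :: nat
  assumes \<alpha>: "\<alpha> > 1" and F: "\<forall>z\<ge>0. F z = z powr \<alpha>" and T: "T > 0"
    and \<phi>_range: "\<forall>y. 0 \<le> \<phi> y \<and> \<phi> y \<le> 1" and \<phi>_supp: "{y. \<phi> y \<noteq> 0} \<subseteq> ball 0 1"
    and M1: "\<forall>y\<in>cball 0 1. (\<Sum>b\<in>Basis. dir_deriv \<phi> b y ^ 2) \<le> M1"
    and M2: "\<forall>y\<in>cball 0 1. \<bar>laplacian_of (\<lambda>v w. dir_deriv (dir_deriv \<phi> v) w y)\<bar> \<le> M2"
    and k: "real k \<ge> \<alpha> / (\<alpha> - 1)" and l: "l \<ge> 2 * \<alpha> / (\<alpha> - 1)"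
    and t: "t \<in> {0..T/2}" and x: "x \<noteq> 0" and u: "u t x \<ge> 0"
  shows "- weak_integrand a \<gamma> F u (test_fn T k l \<phi>) (test_fn_dt T k l \<phi>) (test_fn_hess T k l \<phi>) (t, x)
         \<le> indicator (cball 0 (sqrt T)) x * (3 powr (1 / (\<alpha> - 1))
           * (((2 * real k) powr (\<alpha> / (\<alpha> - 1)) + (l * (l - 1) * M1 + l * M2) powr (\<alpha> / (\<alpha> - 1)))
                * T powr - (\<alpha> / (\<alpha> - 1)) * norm x powr - (\<gamma> / (\<alpha> - 1))
              + \<bar>a\<bar> powr (\<alpha> / (\<alpha> - 1)) * norm x powr - ((2 * \<alpha> + \<gamma>) / (\<alpha> - 1))))"
proof -
  define y where "y = x /\<^sub>R sqrt T"
  define \<sigma> where "\<sigma> = 1 - 2 * t / T"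
  define N1 where "N1 = (\<Sum>b\<in>Basis. dir_deriv \<phi> b y ^ 2)"
  define N2 where "N2 = laplacian_of (\<lambda>v w. dir_deriv (dir_deriv \<phi> v) w y)"
  have \<sigma>: "0 \<le> \<sigma>" "\<sigma> \<le> 1"
    using t T unfolding \<sigma>_def by (auto simp: field_simps)
  have G: "weak_integrand a \<gamma> F u (test_fn T k l \<phi>) (test_fn_dt T k l \<phi>) (test_fn_hess T k l \<phi>) (t, x)
      = u t x * (- (2 * real k / T) * \<sigma> ^ (k - 1) * \<phi> y powr l
                 + \<sigma> ^ k / T * (l * (l - 1) * \<phi> y powr (l - 2) * N1 + l * \<phi> y powr (l - 1) * N2)
                 - a * norm x powr - 2 * (\<sigma> ^ k * \<phi> y powr l))
        + norm x powr \<gamma> * u t x powr \<alpha> * (\<sigma> ^ k * \<phi> y powr l)"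
    using F u \<phi>_range unfolding y_def \<sigma>_def N1_def N2_def
    by (simp add: weak_integrand_def laplacian_test_fn_hess test_fn_def test_fn_dt_def)
  show ?thesis
  proof (cases "x \<in> cball 0 (sqrt T)")
    case True
    then have "y \<in> cball 0 1"
      using T by (simp add: y_def field_simps)
    then have N: "0 \<le> N1" "N1 \<le> M1" "\<bar>N2\<bar> \<le> M2"
      using M1 M2 unfolding N1_def N2_def by (auto intro: sum_nonneg)
    have \<Phi>: "0 \<le> \<phi> y" "\<phi> y \<le> 1" and r: "norm x > 0"
      using \<phi>_range x by auto
    from neg_integrand_young_bound[OF \<alpha> T \<sigma> \<Phi> r u k l N] show ?thesis
      unfolding G using True by simp
  next
    case False
    then have "\<phi> y = 0"
      unfolding y_def using T \<phi>_supp by (intro rescaled_support_outside) auto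
    then show ?thesis
      unfolding G using False by simp
  qed
qed

lemma nn_integral_slab:
  fixes h :: "'a::euclidean_space \<Rightarrow> ennreal"
  assumes [measurable]: "h \<in> borel_measurable borel" and "a \<le> b"
  shows "(\<integral>\<^sup>+z\<in>{a..b} \<times> UNIV. h (snd z) \<partial>(lborel \<Otimes>\<^sub>M lborel)) = ennreal (b - a) * (\<integral>\<^sup>+x. h x \<partial>lborel)"
proof -
  have "(\<integral>\<^sup>+z\<in>{a..b} \<times> UNIV. h (snd z) \<partial>(lborel \<Otimes>\<^sub>M lborel))
      = (\<integral>\<^sup>+t. \<integral>\<^sup>+x. h x * indicator {a..b} t \<partial>lborel \<partial>lborel)"
    by (subst lborel.nn_integral_fst[symmetric]) (auto intro!: nn_integral_cong simp: indicator_def)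
  also have "\<dots> = (\<integral>\<^sup>+t. (\<integral>\<^sup>+x. h x \<partial>lborel) * indicator {a..b} t \<partial>lborel)"
    by (simp add: nn_integral_multc)
  also have "\<dots> = ennreal (b - a) * (\<integral>\<^sup>+x. h x \<partial>lborel)"
    using assms(2) by (simp add: nn_integral_cmult_indicator mult.commute)
  finally show ?thesis .
qed

lemma neg_set_integral_le:
  fixes G H :: "'b \<Rightarrow> real"
  assumes "AE z in M. z \<in> A \<longrightarrow> - G z \<le> H z" "(\<integral>\<^sup>+z\<in>A. ennreal (H z) \<partial>M) \<le> ennreal c" "0 \<le> c"
  shows "- set_lebesgue_integral M A G \<le> c"
proof -
  have "- set_lebesgue_integral M A G = (\<integral>z. - (indicator A z * G z) \<partial>M)"
    by (simp add: set_lebesgue_integral_def)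
  also have "\<dots> \<le> c"
  proof (rule integral_real_bounded[OF assms(3)])
    have "(\<integral>\<^sup>+z. ennreal (- (indicator A z * G z)) \<partial>M) \<le> (\<integral>\<^sup>+z\<in>A. ennreal (H z) \<partial>M)"
      using assms(1) by (intro nn_integral_mono_AE) (auto simp: indicator_def ennreal_leI elim!: eventually_mono)
    with assms(2) show "(\<integral>\<^sup>+z. ennreal (- (indicator A z * G z)) \<partial>M) \<le> ennreal c"
      by simp
  qed
  finally show ?thesis .
qed

lemma nn_integral_majorant:
  fixes c1 c2 p q :: real
  assumes T: "T > 0" and c: "c1 \<ge> 0" "c2 \<ge> 0"
    and q: "q < real DIM('a::euclidean_space)" and p: "c2 \<noteq> 0 \<Longrightarrow> p < real DIM('a)"
  shows "(\<integral>\<^sup>+z\<in>{0..T/2} \<times> UNIV. ennreal (indicator (cball (0::'a) (sqrt T)) (snd z)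
             * (c1 * norm (snd z) powr - q + c2 * norm (snd z) powr - p)) \<partial>(lborel \<Otimes>\<^sub>M lborel))
       = ennreal (T / 2 * (c1 * sqrt T powr (real DIM('a) - q)
                              * enn2real (\<integral>\<^sup>+x\<in>cball (0::'a) 1. ennreal (norm x powr - q) \<partial>lborel)
                          + c2 * sqrt T powr (real DIM('a) - p)
                              * enn2real (\<integral>\<^sup>+x\<in>cball (0::'a) 1. ennreal (norm x powr - p) \<partial>lborel)))"
proof -
  define Iq where "Iq = enn2real (\<integral>\<^sup>+x\<in>cball (0::'a) 1. ennreal (norm x powr - q) \<partial>lborel)"
  define Ip where "Ip = enn2real (\<integral>\<^sup>+x\<in>cball (0::'a) 1. ennreal (norm x powr - p) \<partial>lborel)"
  have sT: "sqrt T > 0"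
    using T by simp
  have [measurable]: "cball (0::'a) (sqrt T) \<in> sets borel"
    by (simp add: borel_closed)
  have "ennreal (indicator (cball (0::'a) (sqrt T)) x * (c1 * norm x powr - q + c2 * norm x powr - p))
      = ennreal c1 * (ennreal (norm x powr - q) * indicator (cball 0 (sqrt T)) x)
        + ennreal c2 * (ennreal (norm x powr - p) * indicator (cball 0 (sqrt T)) x)" for x :: 'a
    using c by (auto simp: indicator_def ennreal_plus ennreal_mult)
  then have "(\<integral>\<^sup>+x. ennreal (indicator (cball (0::'a) (sqrt T)) x * (c1 * norm x powr - q + c2 * norm x powr - p)) \<partial>lborel)
      = ennreal c1 * (\<integral>\<^sup>+x\<in>cball (0::'a) (sqrt T). ennreal (norm x powr - q) \<partial>lborel)
        + ennreal c2 * (\<integral>\<^sup>+x\<in>cball (0::'a) (sqrt T). ennreal (norm x powr - p) \<partial>lborel)"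
    by (simp add: nn_integral_add nn_integral_cmult)
  also have "\<dots> = ennreal (c1 * sqrt T powr (real DIM('a) - q) * Iq + c2 * sqrt T powr (real DIM('a) - p) * Ip)"
  proof -
    have "ennreal c2 * (\<integral>\<^sup>+x\<in>cball (0::'a) (sqrt T). ennreal (norm x powr - p) \<partial>lborel)
        = ennreal (c2 * sqrt T powr (real DIM('a) - p) * Ip)"
      using nn_integral_norm_powr_cball[OF sT p] c by (cases "c2 = 0") (auto simp: Ip_def ennreal_mult mult.assoc)
    moreover have "0 \<le> Iq" "0 \<le> Ip"
      by (simp_all add: Iq_def Ip_def)
    ultimately show ?thesis
      using nn_integral_norm_powr_cball[OF sT q] c
      by (subst ennreal_plus) (simp_all add: Iq_def[symmetric] ennreal_mult[symmetric] mult.assoc)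
  qed
  finally have "(\<integral>\<^sup>+x. ennreal (indicator (cball (0::'a) (sqrt T)) x
      * (c1 * norm x powr - q + c2 * norm x powr - p)) \<partial>lborel)
      = ennreal (c1 * sqrt T powr (real DIM('a) - q) * Iq + c2 * sqrt T powr (real DIM('a) - p) * Ip)" .
  moreover have "(\<integral>\<^sup>+z\<in>{0..T/2} \<times> UNIV. ennreal (indicator (cball (0::'a) (sqrt T)) (snd z)
             * (c1 * norm (snd z) powr - q + c2 * norm (snd z) powr - p)) \<partial>(lborel \<Otimes>\<^sub>M lborel))
      = ennreal (T / 2 - 0) * (\<integral>\<^sup>+x. ennreal (indicator (cball (0::'a) (sqrt T)) x
          * (c1 * norm x powr - q + c2 * norm x powr - p)) \<partial>lborel)"
    using T by (intro nn_integral_slab) auto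
  ultimately show ?thesis
    using T by (simp add: Iq_def Ip_def ennreal_mult'[symmetric])
qed

lemma AE_pair_lborel_snd_neq:
  "AE z in (lborel :: real measure) \<Otimes>\<^sub>M (lborel :: 'a::euclidean_space measure). snd z \<noteq> c"
proof (rule AE_I'[of "UNIV \<times> {c}"])
  show "UNIV \<times> {c} \<in> null_sets ((lborel :: real measure) \<Otimes>\<^sub>M (lborel :: 'a measure))"
    by (rule lborel.times_in_null_sets2) (auto intro: finite_imp_null_set_lborel)
qed auto

lemma majorant_integral_scaling:
  fixes \<alpha> \<gamma> d T :: real
  assumes \<alpha>: "\<alpha> > 1" and T: "T > 0"
  shows "T / 2 * (K1 * T powr - (\<alpha> / (\<alpha> - 1)) * sqrt T powr (d - \<gamma> / (\<alpha> - 1)) * I1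
                  + K2 * sqrt T powr (d - (2 * \<alpha> + \<gamma>) / (\<alpha> - 1)) * I2)
       = (K1 * I1 + K2 * I2) / 2 * T powr (- (2 + \<gamma>) / (2 * (\<alpha> - 1)) + d / 2)"
proof -
  define e where "e = - (2 + \<gamma>) / (2 * (\<alpha> - 1)) + d / 2"
  have sqrt_powr: "sqrt T powr z = T powr (z / 2)" for z
    using T by (simp add: powr_half_sqrt[symmetric] powr_powr)
  have exp1: "1 + - (\<alpha> / (\<alpha> - 1)) + (d - \<gamma> / (\<alpha> - 1)) / 2 = e"
    using \<alpha> by (simp add: e_def divide_simps) (simp add: algebra_simps)
  have "T powr e = T powr 1 * T powr - (\<alpha> / (\<alpha> - 1)) * T powr ((d - \<gamma> / (\<alpha> - 1)) / 2)"
    unfolding exp1[symmetric] powr_add ..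
  then have e1: "T * (T powr - (\<alpha> / (\<alpha> - 1)) * T powr ((d - \<gamma> / (\<alpha> - 1)) / 2)) = T powr e"
    using T by simp
  have exp2: "1 + (d - (2 * \<alpha> + \<gamma>) / (\<alpha> - 1)) / 2 = e"
    using \<alpha> by (simp add: e_def divide_simps) (simp add: algebra_simps)
  have "T powr e = T powr 1 * T powr ((d - (2 * \<alpha> + \<gamma>) / (\<alpha> - 1)) / 2)"
    unfolding exp2[symmetric] powr_add ..
  then have e2: "T * T powr ((d - (2 * \<alpha> + \<gamma>) / (\<alpha> - 1)) / 2) = T powr e"
    using T by simp
  show ?thesis
    using e1 e2 unfolding e_def[symmetric] by (simp add: sqrt_powr algebra_simps)
qed

lemma smooth_fun_derivative_bounds:
  fixes \<phi> :: "'a::euclidean_space \<Rightarrow> real"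
  assumes \<phi>: "smooth_fun \<phi>" and K: "compact K"
  obtains M1 M2 where "\<forall>y\<in>K. (\<Sum>b\<in>Basis. dir_deriv \<phi> b y ^ 2) \<le> M1"
    and "\<forall>y\<in>K. \<bar>laplacian_of (\<lambda>v w. dir_deriv (dir_deriv \<phi> v) w y)\<bar> \<le> M2"
proof -
  have D\<phi>: "smooth_fun (dir_deriv \<phi> v)" "smooth_fun (dir_deriv (dir_deriv \<phi> v) w)" for v w
    by (intro smooth_fun_dir_deriv \<phi>)+
  have "continuous_on K (\<lambda>y. \<Sum>b\<in>Basis. dir_deriv \<phi> b y ^ 2)"
    by (intro continuous_intros continuous_on_smooth_fun D\<phi>)
  then obtain M1 where M1: "\<And>y. y \<in> K \<Longrightarrow> norm (\<Sum>b\<in>Basis. dir_deriv \<phi> b y ^ 2) \<le> M1"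
    using K continuous_on_compact_bound by blast
  have "continuous_on K (\<lambda>y. laplacian_of (\<lambda>v w. dir_deriv (dir_deriv \<phi> v) w y))"
    unfolding laplacian_of_def by (intro continuous_intros continuous_on_smooth_fun D\<phi>)
  then obtain M2 where M2: "\<And>y. y \<in> K \<Longrightarrow> norm (laplacian_of (\<lambda>v w. dir_deriv (dir_deriv \<phi> v) w y)) \<le> M2"
    using K continuous_on_compact_bound by blast
  have "\<forall>y\<in>K. (\<Sum>b\<in>Basis. dir_deriv \<phi> b y ^ 2) \<le> M1"
    using M1[unfolded real_norm_def, THEN abs_le_D1] by blast
  moreover have "\<forall>y\<in>K. \<bar>laplacian_of (\<lambda>v w. dir_deriv (dir_deriv \<phi> v) w y)\<bar> \<le> M2"
    using M2 by simp
  ultimately show ?thesis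
    by (rule that)
qed

lemma weak_solution_initial_bound:
  fixes \<alpha> \<gamma> a l M1 M2 :: real and F :: "real \<Rightarrow> real" and \<phi> :: "'a::euclidean_space \<Rightarrow> real"
    and k :: nat
  assumes \<alpha>: "\<alpha> > 1" and F: "\<forall>z\<ge>0. F z = z powr \<alpha>"
    and \<phi>: "smooth_fun \<phi>" and \<phi>_range: "\<forall>y. 0 \<le> \<phi> y \<and> \<phi> y \<le> 1" and \<phi>_supp: "{y. \<phi> y \<noteq> 0} \<subseteq> ball 0 1"
    and M1: "\<forall>y\<in>cball 0 1. (\<Sum>b\<in>Basis. dir_deriv \<phi> b y ^ 2) \<le> M1"
    and M2: "\<forall>y\<in>cball 0 1. \<bar>laplacian_of (\<lambda>v w. dir_deriv (dir_deriv \<phi> v) w y)\<bar> \<le> M2"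
    and k: "real k \<ge> \<alpha> / (\<alpha> - 1)" and l: "l \<ge> 2 * \<alpha> / (\<alpha> - 1)"
    and q: "\<gamma> / (\<alpha> - 1) < real DIM('a)" and p: "a \<noteq> 0 \<Longrightarrow> (2 * \<alpha> + \<gamma>) / (\<alpha> - 1) < real DIM('a)"
  shows "\<exists>C. \<forall>T u0 u. T > 0 \<and> L1_loc u0 \<and> (\<forall>t\<in>{0..<T}. \<forall>x. u t x \<ge> 0)
            \<and> weak_solution a \<gamma> \<alpha> F u0 T u \<longrightarrow>
          set_lebesgue_integral lborel (ball 0 (sqrt T)) (\<lambda>x. u0 x * \<phi> (x /\<^sub>R sqrt T) powr l)
            \<le> C * T powr (- (2 + \<gamma>) / (2 * (\<alpha> - 1)) + real DIM('a) / 2)"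
proof -
  define q where "q = \<gamma> / (\<alpha> - 1)"
  define p where "p = (2 * \<alpha> + \<gamma>) / (\<alpha> - 1)"
  define K1 where "K1 = 3 powr (1 / (\<alpha> - 1))
    * ((2 * real k) powr (\<alpha> / (\<alpha> - 1)) + (l * (l - 1) * M1 + l * M2) powr (\<alpha> / (\<alpha> - 1)))"
  define K2 where "K2 = 3 powr (1 / (\<alpha> - 1)) * \<bar>a\<bar> powr (\<alpha> / (\<alpha> - 1))"
  define Iq where "Iq = enn2real (\<integral>\<^sup>+x\<in>cball (0::'a) 1. ennreal (norm x powr - q) \<partial>lborel)"
  define Ip where "Ip = enn2real (\<integral>\<^sup>+x\<in>cball (0::'a) 1. ennreal (norm x powr - p) \<partial>lborel)"
  define e where "e = - (2 + \<gamma>) / (2 * (\<alpha> - 1)) + real DIM('a) / 2"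
  have a'_gt_1: "\<alpha> / (\<alpha> - 1) > 1"
    using \<alpha> by simp
  have k1: "k \<ge> 1" and l2: "l > 2"
    using a'_gt_1 k l by linarith+
  have K: "K1 \<ge> 0" "K2 \<ge> 0" "K2 \<noteq> 0 \<Longrightarrow> a \<noteq> 0"
    using \<alpha> by (auto simp: K1_def K2_def)
  show ?thesis
  proof (intro exI[of _ "(K1 * Iq + K2 * Ip) / 2"] allI impI, elim conjE)
    fix T :: real and u0 :: "'a \<Rightarrow> real" and u :: "real \<Rightarrow> 'a \<Rightarrow> real"
    assume T: "T > 0" and u: "\<forall>t\<in>{0..<T}. \<forall>x. u t x \<ge> 0" and ws: "weak_solution a \<gamma> \<alpha> F u0 T u"
    let ?G = "weak_integrand a \<gamma> F u (test_fn T k l \<phi>) (test_fn_dt T k l \<phi>) (test_fn_hess T k l \<phi>)"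
    let ?H = "\<lambda>z. indicator (cball (0::'a) (sqrt T)) (snd z)
      * (K1 * T powr - (\<alpha> / (\<alpha> - 1)) * norm (snd z) powr - q + K2 * norm (snd z) powr - p)"
    have "set_lebesgue_integral lborel (ball 0 (sqrt T)) (\<lambda>x. u0 x * \<phi> (x /\<^sub>R sqrt T) powr l)
        = - set_lebesgue_integral (lborel \<Otimes>\<^sub>M lborel) ({0..T/2} \<times> UNIV) ?G"
      by (rule initial_integral_eq_neg_weak_integral[OF ws T \<phi> \<phi>_range \<phi>_supp k1 l2])
    also have "\<dots> \<le> (K1 * Iq + K2 * Ip) / 2 * T powr e"
    proof (rule neg_set_integral_le)
      have "- ?G z \<le> ?H z" if "snd z \<noteq> 0" "fst z \<in> {0..T/2}" for z
        using neg_weak_integrand_test_fn_le[OF \<alpha> F T \<phi>_range \<phi>_supp M1 M2 k l that(2,1), of u a \<gamma>] u T that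
        by (simp add: K1_def K2_def q_def p_def algebra_simps)
      \<comment> \<open>At \<open>x = 0\<close> the negative powers of \<open>norm x\<close> degenerate to 0, so the bound only holds
        almost everywhere.\<close>
      with AE_pair_lborel_snd_neq[of 0]
      show "AE z in lborel \<Otimes>\<^sub>M lborel. z \<in> {0..T/2} \<times> UNIV \<longrightarrow> - ?G z \<le> ?H z"
        by (auto elim!: eventually_mono)
      have "T / 2 * (K1 * T powr - (\<alpha> / (\<alpha> - 1)) * sqrt T powr (real DIM('a) - q) * Iq
                    + K2 * sqrt T powr (real DIM('a) - p) * Ip)
          = (K1 * Iq + K2 * Ip) / 2 * T powr e"
        unfolding q_def p_def e_def using \<alpha> T by (rule majorant_integral_scaling)
      then show "(\<integral>\<^sup>+z\<in>{0..T/2} \<times> UNIV. ennreal (?H z) \<partial>(lborel \<Otimes>\<^sub>M lborel))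
          \<le> ennreal ((K1 * Iq + K2 * Ip) / 2 * T powr e)"
        using nn_integral_majorant[OF T _ K(2) _ p, of "K1 * T powr - (\<alpha> / (\<alpha> - 1))" q] q K
        by (simp add: Iq_def Ip_def p_def q_def)
      show "0 \<le> (K1 * Iq + K2 * Ip) / 2 * T powr e"
        using K by (simp add: Iq_def Ip_def)
    qed
    finally show "set_lebesgue_integral lborel (ball 0 (sqrt T)) (\<lambda>x. u0 x * \<phi> (x /\<^sub>R sqrt T) powr l)
        \<le> (K1 * Iq + K2 * Ip) / 2 * T powr (- (2 + \<gamma>) / (2 * (\<alpha> - 1)) + real DIM('a) / 2)"
      unfolding e_def .
  qed
qed

theorem lemma5p1:
  fixes \<alpha> \<gamma> a l :: real and F :: "real \<Rightarrow> real" and \<phi> :: "'a::euclidean_space \<Rightarrow> real"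
  assumes "\<alpha> > 1"
    and "a = 0 \<Longrightarrow> real DIM('a) + \<gamma> < \<alpha> * real DIM('a)"
    and "a \<noteq> 0 \<Longrightarrow> real DIM('a) + \<gamma> < \<alpha> * (real DIM('a) - 2)"
    and "\<forall>z\<ge>0. F z = z powr \<alpha>"
    and "smooth_fun \<phi>"
    and "\<forall>x. 0 \<le> \<phi> x \<and> \<phi> x \<le> 1"
    and "\<forall>x. norm x \<le> 1/2 \<longrightarrow> \<phi> x = 1"
    and "closure {x. \<phi> x \<noteq> 0} \<subseteq> cball 0 1"
    and "l \<ge> max 3 (2 * \<alpha> / (\<alpha> - 1))"
  shows "\<exists>C. \<forall>T u0 u. T > 0 \<and> L1_loc u0 \<and> (\<forall>t\<in>{0..<T}. \<forall>x. u t x \<ge> 0)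
            \<and> weak_solution a \<gamma> \<alpha> F u0 T u \<longrightarrow>
          set_lebesgue_integral lborel (ball 0 (sqrt T)) (\<lambda>x. u0 x * \<phi> (x /\<^sub>R sqrt T) powr l)
            \<le> C * T powr (- (2 + \<gamma>) / (2 * (\<alpha> - 1)) + real DIM('a) / 2)"
proof -
  have \<alpha>: "\<alpha> - 1 > 0"
    using assms(1) by simp
  have k: "real (nat \<lceil>\<alpha> / (\<alpha> - 1)\<rceil>) \<ge> \<alpha> / (\<alpha> - 1)"
    by linarith
  have l: "l \<ge> 2 * \<alpha> / (\<alpha> - 1)"
    using assms(9) by simp
  have "\<gamma> < (\<alpha> - 1) * real DIM('a)" and "a \<noteq> 0 \<Longrightarrow> 2 * \<alpha> + \<gamma> < (\<alpha> - 1) * real DIM('a)"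
    using assms(1-3) by (cases "a = 0"; simp add: algebra_simps)+
  then have q: "\<gamma> / (\<alpha> - 1) < real DIM('a)" and p: "a \<noteq> 0 \<Longrightarrow> (2 * \<alpha> + \<gamma>) / (\<alpha> - 1) < real DIM('a)"
    using \<alpha> by (simp_all add: pos_divide_less_eq mult.commute)
  have \<phi>_supp: "{y. \<phi> y \<noteq> 0} \<subseteq> ball 0 1"
    using continuous_on_smooth_fun[OF assms(5)] assms(8) by (rule continuous_nonzero_subset_ball)
  obtain M1 M2 where "\<forall>y\<in>cball 0 1. (\<Sum>b\<in>Basis. dir_deriv \<phi> b y ^ 2) \<le> M1"
    and "\<forall>y\<in>cball 0 1. \<bar>laplacian_of (\<lambda>v w. dir_deriv (dir_deriv \<phi> v) w y)\<bar> \<le> M2"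
    using smooth_fun_derivative_bounds[OF assms(5) compact_cball] .
  from weak_solution_initial_bound[OF assms(1,4,5,6) \<phi>_supp this k l q p]
  show ?thesis .
qed

end
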